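(* Let $B$ be a $p\times q$ matrix, $G$ a $q\times q$ symmetric matrix and $G'$ a $p\times p$ symmetric matrix, and let $E,F$ be $q\times q$ symmetric matrices with $E+F=G$. Let $$A=\begin{bmatrix} G' & B & B\\ B^T & 0 & G\\ B^T & G & 0\end{bmatrix},\qquad D=\begin{bmatrix} G' & B & B\\ B^T & E & F\\ B^T & F & E\end{bmatrix},$$ both of size $(p+2q)\times(p+2q)$. Then $A\oplus\begin{bmatrix} E & F\\ F & E\end{bmatrix}$ and $D\oplus\begin{bmatrix}0 & G\\ G & 0\end{bmatrix}$ are cospectral.
   Context: For matrices $X,Y$, $X\oplus Y=\begin{bmatrix} X&0\\0&Y\end{bmatrix}$, and $0$ denotes a zero matrix of appropriate size. Two square matrices are cospectral if they have the same eigenvalues with the same multiplicities. *)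

theory Defs
  imports "Jordan_Normal_Form.Char_Poly"
begin

definition dsum_mat :: "'a::zero mat \<Rightarrow> 'a mat \<Rightarrow> 'a mat" where
  "dsum_mat X Y = four_block_mat X (0\<^sub>m (dim_row X) (dim_col Y)) (0\<^sub>m (dim_row Y) (dim_col X)) Y"

definition hcat_mat :: "'a::zero mat \<Rightarrow> 'a mat \<Rightarrow> 'a mat" where
  "hcat_mat X Y = four_block_mat X Y (0\<^sub>m 0 (dim_col X)) (0\<^sub>m 0 (dim_col Y))"

definition vcat_mat :: "'a::zero mat \<Rightarrow> 'a mat \<Rightarrow> 'a mat" where
  "vcat_mat X Y = four_block_mat X (0\<^sub>m (dim_row X) 0) Y (0\<^sub>m (dim_row Y) 0)"

definition eig_mult :: "real mat \<Rightarrow> complex \<Rightarrow> nat" where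
  "eig_mult M z = order z (char_poly (map_mat complex_of_real M))"

definition cospectral :: "real mat \<Rightarrow> real mat \<Rightarrow> bool" where
  "cospectral M N \<longleftrightarrow> square_mat M \<and> square_mat N \<and> (\<forall>z. eig_mult M z = eig_mult N z)"

end

theory Submission
  imports Defs
begin

text \<open>Conjugation by \<open>T = [[I, I], [I, -I]]\<close>, for which \<open>T\<^sup>2 = 2I\<close>, takes \<open>[[P, Q], [Q, P]]\<close>
  to \<open>(P + Q) \<oplus> (P - Q)\<close>. Applied to the trailing blocks of a matrix bordered by \<open>[B B]\<close> and
  \<open>[C; C]\<close> it leaves the border \<open>[B 0]\<close>, \<open>[2C; 0]\<close>, so the characteristic polynomial \<open>\<chi>\<close> of
  that matrix is \<open>\<chi>([[G', B], [2C, P + Q]]) \<chi>(P - Q)\<close>. With \<open>K = [[G', B], [2B\<^sup>T, G]]\<close> and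
  \<open>E + F = G\<close>, both direct sums therefore have characteristic polynomial
  \<open>\<chi>(K) \<chi>(G) \<chi>(-G) \<chi>(E - F)\<close>.\<close>

lemma inverse_smult_smult_mat:
  "(c :: 'a :: field) \<noteq> 0 \<Longrightarrow> inverse c \<cdot>\<^sub>m (c \<cdot>\<^sub>m M) = M"
  by (auto intro!: eq_matI)

lemma similar_mat_wit_by_involution:
  fixes A :: "'a :: field mat"
  assumes "A \<in> carrier_mat n n" "B \<in> carrier_mat n n" "S \<in> carrier_mat n n"
    and "S * S = c \<cdot>\<^sub>m 1\<^sub>m n" "c \<noteq> 0" and "S * A = B * S"
  shows "similar_mat_wit A B (inverse c \<cdot>\<^sub>m S) S"
proof (rule similar_mat_witI)
  show "inverse c \<cdot>\<^sub>m S * S = 1\<^sub>m n" "S * (inverse c \<cdot>\<^sub>m S) = 1\<^sub>m n"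
    using assms
    by (simp_all add: mult_smult_assoc_mat mult_smult_distrib inverse_smult_smult_mat \<open>c \<noteq> 0\<close>)
  have "S * B * S = S * (B * S)"
    by (rule assoc_mult_mat) (use assms in auto)
  also have "\<dots> = S * S * A"
    unfolding \<open>S * A = B * S\<close>[symmetric] by (rule assoc_mult_mat[symmetric]) (use assms in auto)
  also have "\<dots> = c \<cdot>\<^sub>m A"
    unfolding \<open>S * S = c \<cdot>\<^sub>m 1\<^sub>m n\<close> using assms(1)
    by (simp add: mult_smult_assoc_mat[OF one_carrier_mat assms(1)])
  finally have "inverse c \<cdot>\<^sub>m S * B * S = inverse c \<cdot>\<^sub>m (c \<cdot>\<^sub>m A)"
    using assms by (metis mult_smult_assoc_mat mult_carrier_mat)
  then show "A = inverse c \<cdot>\<^sub>m S * B * S"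
    by (simp add: inverse_smult_smult_mat \<open>c \<noteq> 0\<close>)
qed (use assms in auto)

lemma char_poly_four_block_mat_lower_left_zero:
  fixes A :: "'a :: idom mat"
  assumes "A \<in> carrier_mat n n" "B \<in> carrier_mat n m" "D \<in> carrier_mat m m"
  shows "char_poly (four_block_mat A B (0\<^sub>m m n) D) = char_poly A * char_poly D"
proof -
  let ?cm = "\<lambda>A. [:0, 1:] \<cdot>\<^sub>m 1\<^sub>m (dim_row A) + map_mat (\<lambda>a. [:- a:]) A"
  have "char_poly (four_block_mat A B (0\<^sub>m m n) D) = det (?cm (four_block_mat A B (0\<^sub>m m n) D))"
    unfolding char_poly_defs using assms by simp
  also have "?cm (four_block_mat A B (0\<^sub>m m n) D)
      = four_block_mat (?cm A) (map_mat (\<lambda>a. [:- a:]) B) (0\<^sub>m m n) (?cm D)"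
    by (rule eq_matI) (use assms in \<open>auto simp: one_poly_def\<close>)
  also have "det \<dots> = det (?cm A) * det (?cm D)"
    by (rule det_four_block_mat_lower_left_zero) (use assms in auto)
  also have "\<dots> = char_poly A * char_poly D"
    unfolding char_poly_defs ..
  finally show ?thesis .
qed

lemma char_poly_dsum_mat:
  fixes X :: "'a :: idom mat"
  assumes "X \<in> carrier_mat n n" "Y \<in> carrier_mat m m"
  shows "char_poly (dsum_mat X Y) = char_poly X * char_poly Y"
proof -
  have dims: "dim_row X = n" "dim_col X = n" "dim_row Y = m" "dim_col Y = m"
    using assms by auto
  show ?thesis
    unfolding dsum_mat_def dims using assms
    by (rule char_poly_four_block_mat_lower_left_zero[OF _ zero_carrier_mat])
qed

lemma cospectral_if_char_poly_eq:
  assumes "M \<in> carrier_mat n n" "N \<in> carrier_mat m m" "char_poly M = char_poly N"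
  shows "cospectral M N"
proof -
  have "char_poly (map_mat complex_of_real M) = map_poly complex_of_real (char_poly M)"
    "char_poly (map_mat complex_of_real N) = map_poly complex_of_real (char_poly N)"
    by (rule of_real_hom.char_poly_hom[OF assms(1)], rule of_real_hom.char_poly_hom[OF assms(2)])
  then show ?thesis
    using assms unfolding cospectral_def eig_mult_def by auto
qed

lemma dsum_mat_carrier [simp]:
  "X \<in> carrier_mat n n' \<Longrightarrow> Y \<in> carrier_mat m m' \<Longrightarrow> dsum_mat X Y \<in> carrier_mat (n + m) (n' + m')"
  unfolding dsum_mat_def by simp

lemma cospectral_dsum_mat:
  assumes "X \<in> carrier_mat n n" "Y \<in> carrier_mat m m"
    and "X' \<in> carrier_mat n' n'" "Y' \<in> carrier_mat m' m'"
    and "char_poly X * char_poly Y = char_poly X' * char_poly Y'"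
  shows "cospectral (dsum_mat X Y) (dsum_mat X' Y')"
  using assms by (intro cospectral_if_char_poly_eq[OF dsum_mat_carrier dsum_mat_carrier])
    (simp_all add: char_poly_dsum_mat)

definition sum_diff_mat :: "nat \<Rightarrow> 'a :: ring_1 mat" where
  "sum_diff_mat n = four_block_mat (1\<^sub>m n) (1\<^sub>m n) (1\<^sub>m n) (- 1\<^sub>m n)"

lemma sum_diff_mat_carrier [simp]: "sum_diff_mat n \<in> carrier_mat (n + n) (n + n)"
  unfolding sum_diff_mat_def by simp

lemma sum_diff_mat_square:
  "sum_diff_mat n * sum_diff_mat n = (2 :: 'a :: ring_1) \<cdot>\<^sub>m 1\<^sub>m (n + n)"
  unfolding sum_diff_mat_def
  by (subst mult_four_block_mat[of _ n n _ n _ n]) (auto intro!: eq_matI)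

lemma sum_diff_mat_intertwines_circulant:
  assumes "P \<in> carrier_mat n n" "Q \<in> carrier_mat n n"
  shows "sum_diff_mat n * four_block_mat P Q Q P
    = four_block_mat (P + Q) (0\<^sub>m n n) (0\<^sub>m n n) (P - Q) * sum_diff_mat n"
proof -
  note I = one_carrier_mat[of n] and I' = uminus_carrier_mat[OF one_carrier_mat[of n]]
  show ?thesis
    unfolding sum_diff_mat_def
    using mult_four_block_mat[OF I I I I' assms(1,2,2,1)]
      mult_four_block_mat[OF add_carrier_mat[OF assms(2)] zero_carrier_mat zero_carrier_mat
        minus_carrier_mat[OF assms(2)] I I I I'] assms
    by (auto intro!: eq_matI)
qed

lemma similar_mat_wit_circulant_block:
  fixes P :: "'a :: field_char_0 mat"
  assumes "P \<in> carrier_mat n n" "Q \<in> carrier_mat n n"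
  shows "similar_mat_wit (four_block_mat P Q Q P)
    (four_block_mat (P + Q) (0\<^sub>m n n) (0\<^sub>m n n) (P - Q)) (inverse 2 \<cdot>\<^sub>m sum_diff_mat n) (sum_diff_mat n)"
  by (rule similar_mat_wit_by_involution[OF _ _ sum_diff_mat_carrier sum_diff_mat_square])
    (use assms sum_diff_mat_intertwines_circulant in \<open>auto simp: minus_carrier_mat\<close>)

lemma char_poly_circulant_block:
  fixes P :: "'a :: field_char_0 mat"
  assumes "P \<in> carrier_mat n n" "Q \<in> carrier_mat n n"
  shows "char_poly (four_block_mat P Q Q P) = char_poly (P + Q) * char_poly (P - Q)"
proof -
  have "char_poly (four_block_mat P Q Q P)
      = char_poly (four_block_mat (P + Q) (0\<^sub>m n n) (0\<^sub>m n n) (P - Q))"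
    using similar_mat_wit_circulant_block[OF assms] by (metis char_poly_similar similar_mat_def)
  also have "\<dots> = char_poly (P + Q) * char_poly (P - Q)"
    using assms by (intro char_poly_four_block_mat_lower_left_zero) (auto simp: minus_carrier_mat)
  finally show ?thesis .
qed

lemma hcat_mat_carrier [simp]:
  "X \<in> carrier_mat n m \<Longrightarrow> Y \<in> carrier_mat n k \<Longrightarrow> hcat_mat X Y \<in> carrier_mat n (m + k)"
  unfolding hcat_mat_def carrier_mat_def by simp

lemma vcat_mat_carrier [simp]:
  "X \<in> carrier_mat n k \<Longrightarrow> Y \<in> carrier_mat m k \<Longrightarrow> vcat_mat X Y \<in> carrier_mat (n + m) k"
  unfolding vcat_mat_def carrier_mat_def by simp

lemma hcat_mat_zero [simp]: "hcat_mat (0\<^sub>m n m) (0\<^sub>m n k) = 0\<^sub>m n (m + k)"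
  unfolding hcat_mat_def by (auto intro!: eq_matI)

lemma vcat_mat_zero [simp]: "vcat_mat (0\<^sub>m n k) (0\<^sub>m m k) = 0\<^sub>m (n + m) k"
  unfolding vcat_mat_def by (auto intro!: eq_matI)

lemma four_block_mat_regroup:
  assumes "A \<in> carrier_mat n0 m0" "B1 \<in> carrier_mat n0 m1" "B2 \<in> carrier_mat n0 m2"
    "C1 \<in> carrier_mat n1 m0" "C2 \<in> carrier_mat n2 m0"
    "D11 \<in> carrier_mat n1 m1" "D12 \<in> carrier_mat n1 m2"
    "D21 \<in> carrier_mat n2 m1" "D22 \<in> carrier_mat n2 m2"
  shows "four_block_mat A (hcat_mat B1 B2) (vcat_mat C1 C2) (four_block_mat D11 D12 D21 D22)
    = four_block_mat (four_block_mat A B1 C1 D11) (vcat_mat B2 D12) (hcat_mat C2 D21) D22"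
  using assms unfolding hcat_mat_def vcat_mat_def by (auto intro!: eq_matI)

lemma similar_mat_wit_bordered_circulant_block:
  fixes A :: "'a :: field_char_0 mat"
  assumes A: "A \<in> carrier_mat m m" and B: "B \<in> carrier_mat m n" and C: "C \<in> carrier_mat n m"
    and P: "P \<in> carrier_mat n n" and Q: "Q \<in> carrier_mat n n"
  shows "similar_mat_wit
    (four_block_mat A (hcat_mat B B) (vcat_mat C C) (four_block_mat P Q Q P))
    (four_block_mat A (hcat_mat B (0\<^sub>m m n)) (vcat_mat (C + C) (0\<^sub>m n m))
      (four_block_mat (P + Q) (0\<^sub>m n n) (0\<^sub>m n n) (P - Q)))
    (four_block_mat (1\<^sub>m m) (0\<^sub>m m (n + n)) (0\<^sub>m (n + n) m) (inverse 2 \<cdot>\<^sub>m sum_diff_mat n))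
    (four_block_mat (1\<^sub>m m) (0\<^sub>m m (n + n)) (0\<^sub>m (n + n) m) (sum_diff_mat n))"
proof (rule similar_mat_wit_four_block[OF similar_mat_wit_refl[OF A]
    similar_mat_wit_circulant_block[OF P Q]])
  note I = one_carrier_mat[of n] and I' = uminus_carrier_mat[OF one_carrier_mat[of n]]
  have "hcat_mat B (0\<^sub>m m n) * sum_diff_mat n = hcat_mat B B"
    unfolding hcat_mat_def sum_diff_mat_def
    using mult_four_block_mat[OF B zero_carrier_mat zero_carrier_mat zero_carrier_mat I I I I'] B
    by (auto intro!: eq_matI)
  then show "hcat_mat B B = 1\<^sub>m m * hcat_mat B (0\<^sub>m m n) * sum_diff_mat n"
    using B by (simp add: left_mult_one_mat[OF hcat_mat_carrier[OF B zero_carrier_mat]])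
  have "sum_diff_mat n * vcat_mat (C + C) (0\<^sub>m n m) = 2 \<cdot>\<^sub>m vcat_mat C C"
    unfolding vcat_mat_def sum_diff_mat_def
    using mult_four_block_mat[OF I I I I' add_carrier_mat[OF C] zero_carrier_mat zero_carrier_mat
      zero_carrier_mat] C
    by (auto intro!: eq_matI)
  moreover have X: "vcat_mat (C + C) (0\<^sub>m n m) \<in> carrier_mat (n + n) m"
    using C by simp
  ultimately have "inverse 2 \<cdot>\<^sub>m sum_diff_mat n * vcat_mat (C + C) (0\<^sub>m n m) = vcat_mat C C"
    by (simp only: mult_smult_assoc_mat[OF sum_diff_mat_carrier X]
        inverse_smult_smult_mat[OF numeral_neq_zero])
  then show "vcat_mat C C = inverse 2 \<cdot>\<^sub>m sum_diff_mat n * vcat_mat (C + C) (0\<^sub>m n m) * 1\<^sub>m m"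
    by (simp add: right_mult_one_mat[OF vcat_mat_carrier[OF C C]])
qed (use A B C P Q in \<open>auto simp: minus_carrier_mat\<close>)

lemma char_poly_bordered_circulant_block:
  fixes A :: "'a :: field_char_0 mat"
  assumes A: "A \<in> carrier_mat m m" and B: "B \<in> carrier_mat m n" and C: "C \<in> carrier_mat n m"
    and P: "P \<in> carrier_mat n n" and Q: "Q \<in> carrier_mat n n"
  shows "char_poly (four_block_mat A (hcat_mat B B) (vcat_mat C C) (four_block_mat P Q Q P))
    = char_poly (four_block_mat A B (C + C) (P + Q)) * char_poly (P - Q)"
proof -
  have "char_poly (four_block_mat A (hcat_mat B B) (vcat_mat C C) (four_block_mat P Q Q P))
      = char_poly (four_block_mat A (hcat_mat B (0\<^sub>m m n)) (vcat_mat (C + C) (0\<^sub>m n m))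
          (four_block_mat (P + Q) (0\<^sub>m n n) (0\<^sub>m n n) (P - Q)))"
    using similar_mat_wit_bordered_circulant_block[OF assms]
    by (metis char_poly_similar similar_mat_def)
  also have "\<dots> = char_poly (four_block_mat (four_block_mat A B (C + C) (P + Q))
      (0\<^sub>m (m + n) n) (0\<^sub>m n (m + n)) (P - Q))"
    using assms by (subst four_block_mat_regroup) (auto simp: minus_carrier_mat)
  also have "\<dots> = char_poly (four_block_mat A B (C + C) (P + Q)) * char_poly (P - Q)"
    using assms by (intro char_poly_four_block_mat_lower_left_zero) (auto simp: minus_carrier_mat)
  finally show ?thesis .
qed

theorem theorem3p18:
  fixes p q :: nat and B G G' E F :: "real mat"
  assumes "B \<in> carrier_mat p q"
    and "G \<in> carrier_mat q q" and "transpose_mat G = G"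
    and "G' \<in> carrier_mat p p" and "transpose_mat G' = G'"
    and "E \<in> carrier_mat q q" and "transpose_mat E = E"
    and "F \<in> carrier_mat q q" and "transpose_mat F = F"
    and "E + F = G"
  shows "cospectral
     (dsum_mat
        (four_block_mat G' (hcat_mat B B) (vcat_mat (transpose_mat B) (transpose_mat B))
           (four_block_mat (0\<^sub>m q q) G G (0\<^sub>m q q)))
        (four_block_mat E F F E))
     (dsum_mat
        (four_block_mat G' (hcat_mat B B) (vcat_mat (transpose_mat B) (transpose_mat B))
           (four_block_mat E F F E))
        (four_block_mat (0\<^sub>m q q) G G (0\<^sub>m q q)))"
proof -
  have Bt: "transpose_mat B \<in> carrier_mat q p" and Z: "0\<^sub>m q q \<in> carrier_mat q q"
    using assms(1) by simp_all
  have "0\<^sub>m q q + G = G"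
    using assms(2) by (rule left_add_zero_mat)
  let ?K = "four_block_mat G' B (transpose_mat B + transpose_mat B) G"
  have A: "char_poly (four_block_mat G' (hcat_mat B B)
      (vcat_mat (transpose_mat B) (transpose_mat B)) (four_block_mat (0\<^sub>m q q) G G (0\<^sub>m q q)))
      = char_poly ?K * char_poly (0\<^sub>m q q - G)"
    using char_poly_bordered_circulant_block[OF assms(4,1) Bt Z assms(2)] \<open>0\<^sub>m q q + G = G\<close>
    by (simp only:)
  have D: "char_poly (four_block_mat G' (hcat_mat B B)
      (vcat_mat (transpose_mat B) (transpose_mat B)) (four_block_mat E F F E))
      = char_poly ?K * char_poly (E - F)"
    using char_poly_bordered_circulant_block[OF assms(4,1) Bt assms(6,8)] assms(10) by (simp only:)
  have EF: "char_poly (four_block_mat E F F E) = char_poly G * char_poly (E - F)"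
    using char_poly_circulant_block[OF assms(6,8)] assms(10) by (simp only:)
  have ZG: "char_poly (four_block_mat (0\<^sub>m q q) G G (0\<^sub>m q q))
      = char_poly G * char_poly (0\<^sub>m q q - G)"
    using char_poly_circulant_block[OF Z assms(2)] \<open>0\<^sub>m q q + G = G\<close> by (simp only:)
  show ?thesis
    by (rule cospectral_dsum_mat[of _ "p + (q + q)" _ "q + q" _ "p + (q + q)" _ "q + q"])
      (use assms A D EF ZG in \<open>simp_all add: ac_simps\<close>)
qed

end
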